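(* Let $\tau\ge1$ and $\mathcal C$ a finite set of candidates. Form the pairwise majority graph on $\mathcal C$ in which each pairwise winner is determined by Weighted Majority Rule 3. Then every candidate in the uncovered set of this graph has distortion at most $\max\{(\frac{\tau+2}{\tau})^2,\tau^2\}$.
   Context: Voters $N=\{1,\dots,n\}$ and candidates $\mathcal C$ are points of an arbitrary metric space $(X,d)$. $SC(Y)=\sum_{i\in N}d(i,Y)$; distortion of $P$ is $SC(P)/\min_{Z\in\mathcal C}SC(Z)$. For a pair $P,Q$, Weighted Majority Rule 3 counts $|A|$, the number of voters with $d(i,Q)/d(i,P)\ge\tau$, and $|B|$, the number with $d(j,P)/d(j,Q)\ge\tau$, and declares $P$ the winner if $|A|\ge|B|$, else $Q$ (other voters are ignored). A candidate $P$ is in the uncovered set if for every other candidate $Z$, either $P$ beats $Z$, or there is a candidate $Q$ such that $P$ beats $Q$ and $Q$ beats $Z$. *)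

theory Defs
  imports Main "HOL-Analysis.Analysis"
begin

definition SC :: "nat \<Rightarrow> (nat \<Rightarrow> 'a::metric_space) \<Rightarrow> 'a \<Rightarrow> real" where
  "SC n v Y = (\<Sum>i\<in>{1..n}. dist (v i) Y)"

definition distortion :: "nat \<Rightarrow> (nat \<Rightarrow> 'a::metric_space) \<Rightarrow> 'a set \<Rightarrow> 'a \<Rightarrow> real" where
  "distortion n v C P = SC n v P / Min (SC n v ` C)"

text \<open>Set A: voters with d(i,Q)/d(i,P) \<ge> tau, written multiplicatively
(d(i,Q) \<ge> tau * d(i,P)), so that d(i,P)=0 < d(i,Q) counts as ratio +\<infinity>.\<close>
definition setA :: "real \<Rightarrow> nat \<Rightarrow> (nat \<Rightarrow> 'a::metric_space) \<Rightarrow> 'a \<Rightarrow> 'a \<Rightarrow> nat set" where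
  "setA \<tau> n v P Q = {i\<in>{1..n}. dist (v i) Q \<ge> \<tau> * dist (v i) P}"

definition wmr3_P_wins :: "real \<Rightarrow> nat \<Rightarrow> (nat \<Rightarrow> 'a::metric_space) \<Rightarrow> 'a \<Rightarrow> 'a \<Rightarrow> bool" where
  "wmr3_P_wins \<tau> n v P Q \<longleftrightarrow> card (setA \<tau> n v P Q) \<ge> card (setA \<tau> n v Q P)"

text \<open>A pairwise majority graph (tournament) on C whose edges agree with WMR3:
for every pair of distinct candidates exactly one beats the other, and whenever
P beats Q the rule declares P the winner (ties may be oriented either way).\<close>
definition wmr3_graph :: "real \<Rightarrow> nat \<Rightarrow> (nat \<Rightarrow> 'a::metric_space) \<Rightarrow> 'a set \<Rightarrow> ('a \<Rightarrow> 'a \<Rightarrow> bool) \<Rightarrow> bool" where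
  "wmr3_graph \<tau> n v C beats \<longleftrightarrow>
     (\<forall>P\<in>C. \<forall>Q\<in>C. P \<noteq> Q \<longrightarrow> (beats P Q \<longleftrightarrow> \<not> beats Q P)) \<and>
     (\<forall>P\<in>C. \<forall>Q\<in>C. P \<noteq> Q \<longrightarrow> beats P Q \<longrightarrow> wmr3_P_wins \<tau> n v P Q)"

definition uncovered :: "'a set \<Rightarrow> ('a \<Rightarrow> 'a \<Rightarrow> bool) \<Rightarrow> 'a \<Rightarrow> bool" where
  "uncovered C beats P \<longleftrightarrow> P \<in> C \<and>
     (\<forall>Z\<in>C. Z \<noteq> P \<longrightarrow> beats P Z \<or> (\<exists>Q\<in>C. beats P Q \<and> beats Q Z))"

end

theory Submission
  imports Defs
begin

text \<open>Write \<open>K = max ((\<tau>+2)/\<tau>) \<tau>\<close>. If P wins against Z under WMR3 then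
\<open>SC(P) \<le> K \<cdot> SC(Z)\<close>: voter by voter, \<open>d(i,P) - K d(i,Z)\<close> is at most \<open>+d(P,Z)\<close> for voters
that strongly prefer Z, at most \<open>-d(P,Z)\<close> for voters that strongly prefer P and not Z, and
at most 0 otherwise; since P wins, the negative terms outnumber the positive ones.
An uncovered candidate reaches every other candidate in at most two wins, so its
social cost is within a factor \<open>K\<^sup>2\<close> of the optimum.\<close>

lemma SC_nonneg: "SC n v Y \<ge> 0"
  unfolding SC_def by (simp add: sum_nonneg)

lemma dist_minus_wmr3_factor_le:
  fixes x P Z :: "'a::metric_space"
  assumes "\<tau> \<ge> 1"
  shows "dist x P - max ((\<tau>+2)/\<tau>) \<tau> * dist x Z
     \<le> dist P Z * (of_bool (\<tau> * dist x Z \<le> dist x P \<and> \<not> \<tau> * dist x P \<le> dist x Z)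
                  - of_bool (\<tau> * dist x P \<le> dist x Z \<and> \<not> \<tau> * dist x Z \<le> dist x P))"
proof -
  define p z K where "p = dist x P" and "z = dist x Z" and "K = max ((\<tau>+2)/\<tau>) \<tau>"
  have p_le: "p \<le> z + dist P Z" and D_le: "dist P Z \<le> p + z"
    unfolding p_def z_def by (metis dist_commute dist_triangle)+
  have z0: "z \<ge> 0" unfolding z_def by simp
  have Kz: "z \<le> K * z" "\<tau> * z \<le> K * z" "z + 2 * (z / \<tau>) \<le> K * z"
  proof -
    have "z + 2 * (z / \<tau>) = (\<tau>+2)/\<tau> * z" using assms by (simp add: field_simps)
    also have "\<dots> \<le> K * z" unfolding K_def by (rule mult_right_mono) (simp_all add: z0)
    finally show "z + 2 * (z / \<tau>) \<le> K * z" .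
    show "\<tau> * z \<le> K * z" unfolding K_def by (simp add: mult_right_mono z0)
    with mult_right_mono[OF assms z0] show "z \<le> K * z" by simp
  qed
  have p_le_z: "p \<le> z / \<tau>" if "\<tau> * p \<le> z" using that assms by (simp add: field_simps)
  have "z / \<tau> \<le> z" using assms z0 by (simp add: divide_le_eq mult_le_cancel_left1)
  then have "p - K * z \<le> dist P Z * (of_bool (\<tau> * z \<le> p \<and> \<not> \<tau> * p \<le> z)
                                    - of_bool (\<tau> * p \<le> z \<and> \<not> \<tau> * z \<le> p))"
    using p_le D_le Kz p_le_z by auto
  then show ?thesis unfolding p_def z_def K_def .
qed

lemma SC_le_if_wmr3_P_wins:
  fixes v :: "nat \<Rightarrow> 'a::metric_space"
  assumes "\<tau> \<ge> 1" and "wmr3_P_wins \<tau> n v P Z"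
  shows "SC n v P \<le> max ((\<tau>+2)/\<tau>) \<tau> * SC n v Z"
proof -
  define K A B where "K = max ((\<tau>+2)/\<tau>) \<tau>"
    and "A = setA \<tau> n v P Z" and "B = setA \<tau> n v Z P"
  have AB: "A \<subseteq> {1..n}" "B \<subseteq> {1..n}" unfolding A_def B_def setA_def by auto
  then have card_le: "card (B - A) \<le> card (A - B)"
    using card_le_sym_Diff[of B A] assms(2) finite_subset
    unfolding wmr3_P_wins_def A_def B_def by blast
  have "SC n v P - K * SC n v Z = (\<Sum>i\<in>{1..n}. dist (v i) P - K * dist (v i) Z)"
    unfolding SC_def by (simp add: sum_subtractf sum_distrib_left)
  also have "\<dots> \<le> (\<Sum>i\<in>{1..n}. dist P Z * (of_bool (i \<in> B - A) - of_bool (i \<in> A - B)))"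
  proof (rule sum_mono)
    fix i assume "i \<in> {1..n}"
    then have "i \<in> B - A \<longleftrightarrow> \<tau> * dist (v i) Z \<le> dist (v i) P \<and> \<not> \<tau> * dist (v i) P \<le> dist (v i) Z"
      and "i \<in> A - B \<longleftrightarrow> \<tau> * dist (v i) P \<le> dist (v i) Z \<and> \<not> \<tau> * dist (v i) Z \<le> dist (v i) P"
      unfolding A_def B_def setA_def by auto
    then show "dist (v i) P - K * dist (v i) Z
        \<le> dist P Z * (of_bool (i \<in> B - A) - of_bool (i \<in> A - B))"
      unfolding K_def by (simp only: dist_minus_wmr3_factor_le[OF assms(1)])
  qed
  also have "\<dots> = dist P Z * (real (card (B - A)) - real (card (A - B)))"
  proof -
    have "{1..n} \<inter> {i \<in> B. i \<notin> A} = B - A" "{1..n} \<inter> {i \<in> A. i \<notin> B} = A - B"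
      using AB by auto
    then show ?thesis by (simp add: sum_subtractf algebra_simps flip: sum_distrib_left)
  qed
  also have "\<dots> \<le> 0" using card_le by (simp add: mult_nonneg_nonpos)
  finally show ?thesis unfolding K_def by simp
qed

lemma uncovered_cost_le:
  fixes f :: "'a \<Rightarrow> real"
  assumes "uncovered C beats P" and "Z \<in> C" and "K \<ge> 1"
    and nonneg: "\<And>X. X \<in> C \<Longrightarrow> f X \<ge> 0"
    and step: "\<And>X Y. X \<in> C \<Longrightarrow> Y \<in> C \<Longrightarrow> X \<noteq> Y \<Longrightarrow> beats X Y \<Longrightarrow> f X \<le> K * f Y"
  shows "f P \<le> K\<^sup>2 * f Z"
proof -
  have P: "P \<in> C" using assms(1) unfolding uncovered_def by blast
  have K_le_K2: "K * f Y \<le> K\<^sup>2 * f Y" if "Y \<in> C" for Y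
    using assms(3) nonneg[OF that] by (simp add: mult_right_mono power2_eq_square)
  have f_le_K2: "f Y \<le> K\<^sup>2 * f Y" if "Y \<in> C" for Y
    using mult_right_mono[OF assms(3) nonneg[OF that]] K_le_K2[OF that] by simp
  show ?thesis
  proof (cases "Z = P")
    case True
    then show ?thesis using f_le_K2[OF P] by simp
  next
    case False
    from assms(1,2) False consider "beats P Z" | Q where "Q \<in> C" "beats P Q" "beats Q Z"
      unfolding uncovered_def by blast
    then show ?thesis
    proof cases
      case 1
      then show ?thesis using step[OF P assms(2) False[symmetric]] K_le_K2[OF assms(2)] by simp
    next
      case (2 Q)
      show ?thesis
      proof (cases "Q = P \<or> Q = Z")
        case True
        then show ?thesis
          using 2 step[OF P assms(2) False[symmetric]] K_le_K2[OF assms(2)] by auto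
      next
        case False
        have "f P \<le> K * f Q" using step[OF P 2(1)] 2(2) False by auto
        also have "\<dots> \<le> K * (K * f Z)" using step[OF 2(1) assms(2)] 2(3) False assms(3) by simp
        finally show ?thesis by (simp add: power2_eq_square)
      qed
    qed
  qed
qed

lemma distortion_le:
  fixes v :: "nat \<Rightarrow> 'a::metric_space"
  assumes "finite C" and "C \<noteq> {}" and "c \<ge> 0"
    and "\<And>Z. Z \<in> C \<Longrightarrow> SC n v P \<le> c * SC n v Z"
  shows "distortion n v C P \<le> c"
proof -
  have "Min (SC n v ` C) \<in> SC n v ` C" using assms(1,2) by simp
  then obtain Z where Z: "Z \<in> C" "Min (SC n v ` C) = SC n v Z" by auto
  show ?thesis
  proof (cases "SC n v Z = 0")
    case True
    then show ?thesis unfolding distortion_def Z(2) using assms(3) by simp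
  next
    case False
    then have "SC n v Z > 0" using SC_nonneg[of n v Z] by simp
    then show ?thesis unfolding distortion_def Z(2) using assms(4)[OF Z(1)]
      by (simp add: divide_le_eq)
  qed
qed

theorem mainTheorem8:
  fixes \<tau> :: real and n :: nat and v :: "nat \<Rightarrow> 'a::metric_space" and C :: "'a set"
    and beats :: "'a \<Rightarrow> 'a \<Rightarrow> bool" and P :: 'a
  assumes "\<tau> \<ge> 1"
    and "finite C" and "C \<noteq> {}"
    and "wmr3_graph \<tau> n v C beats"
    and "uncovered C beats P"
  shows "distortion n v C P \<le> max (((\<tau> + 2) / \<tau>)\<^sup>2) (\<tau>\<^sup>2)"
proof -
  define K where "K = max ((\<tau>+2)/\<tau>) \<tau>"
  have "K \<ge> 1" unfolding K_def using assms(1) by auto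
  have K2: "K\<^sup>2 = max (((\<tau> + 2) / \<tau>)\<^sup>2) (\<tau>\<^sup>2)"
    unfolding K_def using assms(1) by (auto simp: max_def power_mono)
  have "SC n v P \<le> K\<^sup>2 * SC n v Z" if "Z \<in> C" for Z
  proof (rule uncovered_cost_le[OF assms(5) that \<open>K \<ge> 1\<close> SC_nonneg])
    fix X Y assume "X \<in> C" "Y \<in> C" "X \<noteq> Y" "beats X Y"
    then show "SC n v X \<le> K * SC n v Y"
      using SC_le_if_wmr3_P_wins[OF assms(1)] assms(4) unfolding wmr3_graph_def K_def by blast
  qed
  then have "distortion n v C P \<le> K\<^sup>2"
    by (intro distortion_le[OF assms(2,3)]) simp_all
  then show ?thesis unfolding K2 .
qed

end
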